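(* The pair of graded graphs $(\mathbf{Motz}_\bullet,\mathbf{U},\mathbf{V})$ is $\phi$-diagonal dual, i.e. $\mathbf{V}^\star\mathbf{U}-\mathbf{U}\mathbf{V}^\star=\phi$, for the linear map $\phi$ defined by $$\phi(u)=\big(2+\#\{i\in[|u|-1] : u_i\ne u_{i+1}\}\big)\,u$$ for every $u\in\mathbf{Motz}$.
   Context: $\mathbb{K}$ is a field of characteristic zero. $\mathbf{Motz}$ is the set of all nonempty words $u=u_1\cdots u_n$ of nonnegative integers with $u_1=u_n=0$ and $|u_{i+1}-u_i|\le1$ for all $i$ (the elements of the operad of Motzkin paths, generated by $00$ and $010$). $\mathbf{Motz}_\bullet$ is this set graded by the degree $\#\{i\in[n-1] : u_{i+1}\ge u_i\}$ (number of flat and up steps). The prefix graph and twisted prefix graph of this operad are given by the linear maps on $\mathbb{K}\langle\mathbf{Motz}\rangle$ (basis: these words) $$\mathbf{U}(u)=\sum_{i\in[|u|]}\big(u_1\cdots u_i\,u_i\,u_{i+1}\cdots u_{|u|}+u_1\cdots u_i\,(u_i+1)\,u_i\,u_{i+1}\cdots u_{|u|}\big),$$ $$\mathbf{V}(u)=\sum_{\substack{i\in[|u|]\\ i=|u|\text{ or } u_i>u_{i+1}}}\big(u_1\cdots u_i\,u_i\,u_{i+1}\cdots u_{|u|}+u_1\cdots u_i\,(u_i+1)\,u_i\,u_{i+1}\cdots u_{|u|}\big).$$ $\mathbf{V}^\star$ is the adjoint of $\mathbf{V}$ for the scalar product making the words orthonormal. *)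

theory Defs
  imports Main
begin

text \<open>Words are lists of naturals, positions are 0-based: u!0 = u_1, ..., u!(length u - 1) = u_n.\<close>

definition motz :: "nat list \<Rightarrow> bool" where
  "motz u \<longleftrightarrow> u \<noteq> [] \<and> hd u = 0 \<and> last u = 0 \<and>
     (\<forall>i. Suc i < length u \<longrightarrow> u ! Suc i \<le> u ! i + 1 \<and> u ! i \<le> u ! Suc i + 1)"

definition ins_words :: "nat list \<Rightarrow> nat \<Rightarrow> nat list list" where
  "ins_words u i = [take (Suc i) u @ [u ! i] @ drop (Suc i) u,
                    take (Suc i) u @ [u ! i + 1, u ! i] @ drop (Suc i) u]"

text \<open>U(u) and V(u) as lists of words (a sum of basis vectors with multiplicities).\<close>
definition U_list :: "nat list \<Rightarrow> nat list list" where
  "U_list u = concat (map (ins_words u) [0..<length u])"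

definition V_list :: "nat list \<Rightarrow> nat list list" where
  "V_list u = concat (map (ins_words u)
      (filter (\<lambda>i. Suc i = length u \<or> u ! i > u ! Suc i) [0..<length u]))"

text \<open>Vectors of K<Motz>: finitely supported functions from words to K with support in Motz.\<close>
definition in_KMotz :: "(nat list \<Rightarrow> 'k::zero) \<Rightarrow> bool" where
  "in_KMotz f \<longleftrightarrow> finite {u. f u \<noteq> 0} \<and> (\<forall>u. f u \<noteq> 0 \<longrightarrow> motz u)"

definition U_op :: "(nat list \<Rightarrow> 'k::field_char_0) \<Rightarrow> nat list \<Rightarrow> 'k" where
  "U_op f w = (\<Sum>u\<in>{u. motz u \<and> f u \<noteq> 0}. f u * of_nat (count_list (U_list u) w))"

text \<open>Adjoint of V for the scalar product making words orthonormal: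
  coefficient of u in V*(f) is <f, V(u)>.\<close>
definition Vstar_op :: "(nat list \<Rightarrow> 'k::field_char_0) \<Rightarrow> nat list \<Rightarrow> 'k" where
  "Vstar_op f u = (if motz u then
     (\<Sum>w\<in>{w. motz w \<and> f w \<noteq> 0}. f w * of_nat (count_list (V_list u) w)) else 0)"

definition phi_op :: "(nat list \<Rightarrow> 'k::field_char_0) \<Rightarrow> nat list \<Rightarrow> 'k" where
  "phi_op f u = (if motz u then
     of_nat (2 + card {i. Suc i < length u \<and> u ! i \<noteq> u ! Suc i}) * f u else 0)"

end

theory Submission imports Defs "HOL-Library.Multiset" begin

(* On a basis word, U inserts a plateau a a or a peak a (a+1) a after every letter, and V does
   the same only after a descent or after the last letter; so V* deletes such a pattern when it is
   followed by a strictly lower letter or ends the word. Peeling off the first letter, every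
   deletion and insertion acting at different places commute, and what is left over is the
   diagonal term: 2 for the insertion after the last letter, plus 2 for every descent. A Motzkin
   path goes down as often as it goes up, so twice its number of descents is its number of
   changes of letter. *)

section \<open>Operators on basis words as multisets\<close>

fun U_word :: "nat list \<Rightarrow> nat list multiset" where
  "U_word [] = {#}"
| "U_word (a#r) = {#a#a#r, a#Suc a#a#r#} + image_mset (Cons a) (U_word r)"

definition hd_less :: "nat list \<Rightarrow> nat \<Rightarrow> bool" where
  "hd_less s b = (case s of [] \<Rightarrow> True | c#_ \<Rightarrow> c < b)"

text \<open>The words a # r such that a # z arises from V(a # r) by an insertion after a.\<close>
fun Vstar_head :: "nat \<Rightarrow> nat list \<Rightarrow> nat list multiset" where
  "Vstar_head a [] = {#}"
| "Vstar_head a [b] = (if a = b then {#[a]#} else {#})"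
| "Vstar_head a (b#c#s) = (if a = b \<and> c < b then {#a#c#s#} else {#})
     + (if b = Suc a \<and> c = a \<and> hd_less s a then {#a#s#} else {#})"

fun Vstar_word :: "nat list \<Rightarrow> nat list multiset" where
  "Vstar_word [] = {#}"
| "Vstar_word (a#z) = Vstar_head a z + image_mset (Cons a) (Vstar_word z)"

definition U_ms :: "nat list multiset \<Rightarrow> nat list multiset" where
  "U_ms M = \<Sum>\<^sub># (image_mset U_word M)"

definition Vstar_ms :: "nat list multiset \<Rightarrow> nat list multiset" where
  "Vstar_ms M = \<Sum>\<^sub># (image_mset Vstar_word M)"

lemma U_ms_simps [simp]:
  "U_ms {#} = {#}" "U_ms (M + N) = U_ms M + U_ms N" "U_ms (add_mset x M) = U_word x + U_ms M"
  by (simp_all add: U_ms_def)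

lemma Vstar_ms_simps [simp]:
  "Vstar_ms {#} = {#}" "Vstar_ms (M + N) = Vstar_ms M + Vstar_ms N"
  "Vstar_ms (add_mset x M) = Vstar_word x + Vstar_ms M"
  by (simp_all add: Vstar_ms_def)

lemma U_ms_image_Cons:
  "U_ms (image_mset (Cons a) M) =
     image_mset (\<lambda>y. a#a#y) M + image_mset (\<lambda>y. a#Suc a#a#y) M + image_mset (Cons a) (U_ms M)"
  by (induction M) simp_all

lemma Vstar_ms_image_Cons:
  "Vstar_ms (image_mset (Cons a) M) =
     \<Sum>\<^sub># (image_mset (Vstar_head a) M) + image_mset (Cons a) (Vstar_ms M)"
  by (induction M) simp_all

fun descents :: "nat list \<Rightarrow> nat" where
  "descents [] = 0"
| "descents [a] = 0"
| "descents (a#b#s) = (if b < a then 1 else 0) + descents (b#s)"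

lemma hd_less_U_word: "t \<in># U_word s \<Longrightarrow> hd_less t a = hd_less s a"
  by (cases s) (auto simp: hd_less_def)

lemma sum_Vstar_head_Cons2:
  assumes "\<forall>t\<in>#M. hd_less t a = P"
  shows "\<Sum>\<^sub># (image_mset (\<lambda>t. Vstar_head a (b#c#t)) M) =
     (if a = b \<and> c < b then image_mset (\<lambda>t. a#c#t) M else {#}) +
     (if b = Suc a \<and> c = a \<and> P then image_mset (Cons a) M else {#})"
  using assms by (induction M) auto

lemma Vstar_head_U_commute:
  "\<Sum>\<^sub># (image_mset (Vstar_head a) (U_word (b#s))) + image_mset (Cons a) (Vstar_head a (b#s))
     + image_mset (\<lambda>y. a#Suc a#y) (Vstar_head a (b#s)) = U_ms (Vstar_head a (b#s))"
proof (cases s)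
  case Nil
  then show ?thesis by auto
next
  case (Cons c s')
  have "\<Sum>\<^sub># (image_mset (\<lambda>t. Vstar_head a (b#c#t)) (U_word s')) =
     (if a = b \<and> c < b then image_mset (\<lambda>t. a#c#t) (U_word s') else {#}) +
     (if b = Suc a \<and> c = a \<and> hd_less s' a then image_mset (Cons a) (U_word s') else {#})"
    by (rule sum_Vstar_head_Cons2) (auto dest: hd_less_U_word)
  then show ?thesis
    unfolding Cons by (auto simp: hd_less_def U_ms_image_Cons image_mset.compositionality o_def)
qed

lemma Vstar_U_word:
  "u \<noteq> [] \<Longrightarrow> Vstar_ms (U_word u) = U_ms (Vstar_word u) + replicate_mset (2 + 2 * descents u) u"
proof (induction u)
  case Nil
  then show ?case by simp
next
  case (Cons a r)
  show ?case
  proof (cases r)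
    case Nil
    then show ?thesis by (simp add: numeral_2_eq_2 hd_less_def)
  next
    case (Cons b s)
    have IH: "Vstar_ms (U_word r) = U_ms (Vstar_word r) + replicate_mset (2 + 2 * descents r) r"
      using Cons.IH Cons by simp
    have "Vstar_ms (U_word (a#r)) = Vstar_head a (a#r) + Vstar_head a (Suc a#a#r)
        + image_mset (Cons a) (Vstar_head (Suc a) (a#r))
        + (\<Sum>\<^sub># (image_mset (Vstar_head a) (U_word r)) + image_mset (Cons a) (Vstar_head a r)
           + image_mset (\<lambda>y. a#Suc a#y) (Vstar_head a r))
        + image_mset (\<lambda>y. a#a#y) (Vstar_word r) + image_mset (\<lambda>y. a#Suc a#a#y) (Vstar_word r)
        + image_mset (Cons a) (Vstar_ms (U_word r))"
      by (simp add: Vstar_ms_image_Cons image_mset.compositionality o_def)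
    also have "\<dots> = Vstar_head a (a#r) + Vstar_head a (Suc a#a#r)
        + image_mset (Cons a) (Vstar_head (Suc a) (a#r)) + U_ms (Vstar_head a r)
        + image_mset (\<lambda>y. a#a#y) (Vstar_word r) + image_mset (\<lambda>y. a#Suc a#a#y) (Vstar_word r)
        + image_mset (Cons a) (U_ms (Vstar_word r) + replicate_mset (2 + 2 * descents r) r)"
      using Vstar_head_U_commute[of a b s] IH Cons by simp
    also have "\<dots> = U_ms (Vstar_word (a#r)) + replicate_mset (2 + 2 * descents (a#r)) (a#r)"
    proof (cases "b < a")
      case True
      then have "2 + 2 * descents (a#r) = Suc (Suc (2 + 2 * descents r))"
        using Cons by simp
      then show ?thesis using True unfolding Cons by (simp add: U_ms_image_Cons hd_less_def)
    next
      case False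
      then show ?thesis unfolding Cons by (simp add: U_ms_image_Cons hd_less_def)
    qed
    finally show ?thesis .
  qed
qed

lemma ins_words_Cons_Suc: "ins_words (a#r) (Suc i) = map (Cons a) (ins_words r i)"
  by (simp add: ins_words_def)

lemma upt_0_Suc_Cons: "[0..<Suc n] = 0 # map Suc [0..<n]"
  by (simp add: upt_conv_Cons map_Suc_upt)

lemma U_list_Cons: "U_list (a#r) = [a#a#r, a#Suc a#a#r] @ map (Cons a) (U_list r)"
  by (simp add: U_list_def upt_0_Suc_Cons ins_words_def[of "a#r" 0] ins_words_Cons_Suc
      map_concat o_def del: upt_Suc)

lemma mset_U_list: "mset (U_list u) = U_word u"
  by (induction u) (simp add: U_list_def, simp add: U_list_Cons)

lemma V_list_Cons:
  "V_list (a#r) = (if r = [] \<or> hd r < a then [a#a#r, a#Suc a#a#r] else []) @ map (Cons a) (V_list r)"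
proof -
  define P where "P = (\<lambda>i. Suc i = length (a#r) \<or> (a#r) ! i > (a#r) ! Suc i)"
  define Q where "Q = (\<lambda>i. Suc i = length r \<or> r ! i > r ! Suc i)"
  have "V_list (a#r) = concat (map (ins_words (a#r)) (filter P (0 # map Suc [0..<length r])))"
    unfolding V_list_def P_def length_Cons upt_0_Suc_Cons ..
  moreover have "filter P (map Suc [0..<length r]) = map Suc (filter Q [0..<length r])"
    by (simp add: filter_map o_def P_def Q_def)
  moreover have "P 0 \<longleftrightarrow> r = [] \<or> hd r < a"
    unfolding P_def by (cases r) auto
  moreover have "V_list r = concat (map (ins_words r) (filter Q [0..<length r]))"
    unfolding V_list_def Q_def ..
  moreover have "concat (map (ins_words (a#r) \<circ> Suc) is) = map (Cons a) (concat (map (ins_words r) is))"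
    for "is" by (induction "is") (simp_all add: ins_words_Cons_Suc)
  ultimately show ?thesis
    by (simp add: ins_words_def[of "a#r" 0])
qed

lemma count_image_mset_Cons:
  "count (image_mset (Cons x) M) w = (case w of [] \<Rightarrow> 0 | a#r \<Rightarrow> if x = a then count M r else 0)"
  by (induction M) (auto split: list.split)

lemma count_Vstar_head:
  "count (Vstar_head x z) w = (case w of [] \<Rightarrow> 0 | a#r \<Rightarrow> if r = [] \<or> hd r < a then
     (if x#z = a#a#r then 1 else 0) + (if x#z = a#Suc a#a#r then 1 else 0) else 0)"
proof (cases z rule: remdups_adj.cases)
  case (3 y c s)
  then show ?thesis by (cases w rule: remdups_adj.cases; cases s) (auto simp: hd_less_def)
qed (auto split: list.split)

lemma count_V_list: "count (mset (V_list u)) w = count (Vstar_word w) u"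
proof (induction u arbitrary: w)
  case Nil
  have "count (Vstar_word w) [] = 0"
    by (induction w) (simp_all add: count_Vstar_head count_image_mset_Cons)
  then show ?case
    by (simp add: V_list_def)
next
  case (Cons a r)
  then show ?case
    by (cases w) (simp_all add: V_list_Cons count_image_mset_Cons count_Vstar_head)
qed

fun unit_steps :: "nat list \<Rightarrow> bool" where
  "unit_steps [] = True"
| "unit_steps [a] = True"
| "unit_steps (a#b#r) \<longleftrightarrow> b \<le> Suc a \<and> a \<le> Suc b \<and> unit_steps (b#r)"

lemma unit_steps_iff_nth:
  "unit_steps u \<longleftrightarrow> (\<forall>i. Suc i < length u \<longrightarrow> u ! Suc i \<le> u ! i + 1 \<and> u ! i \<le> u ! Suc i + 1)"
proof (induction u rule: unit_steps.induct)
  case (3 a b r)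
  have all_nat_cases: "(\<forall>i. P i) \<longleftrightarrow> P 0 \<and> (\<forall>i. P (Suc i))" for P :: "nat \<Rightarrow> bool"
    by (metis not0_implies_Suc)
  from all_nat_cases[of "\<lambda>i. Suc i < length (a#b#r) \<longrightarrow> _ i"] show ?case
    using "3" by simp
qed auto

lemma motz_iff_unit_steps: "motz u \<longleftrightarrow> u \<noteq> [] \<and> hd u = 0 \<and> last u = 0 \<and> unit_steps u"
  unfolding motz_def unit_steps_iff_nth ..

lemma unit_steps_Cons:
  "unit_steps (a#r) \<longleftrightarrow> unit_steps r \<and> (r = [] \<or> hd r \<le> Suc a \<and> a \<le> Suc (hd r))"
  by (cases r) auto

lemma mem_U_word:
  "x \<in># U_word u \<Longrightarrow> x \<noteq> [] \<and> hd x = hd u \<and> last x = last u \<and> (unit_steps u \<longrightarrow> unit_steps x)"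
proof (induction u arbitrary: x)
  case (Cons a r)
  then consider "x = a#a#r" | "x = a#Suc a#a#r" | y where "x = a#y" "y \<in># U_word r"
    by auto
  then show ?case
  proof cases
    case 3
    then have "r \<noteq> []" by (cases r) auto
    with Cons.IH[OF 3(2)] 3(1) show ?thesis by (auto simp: unit_steps_Cons)
  qed auto
qed simp

lemma mem_Vstar_head:
  "y \<in># Vstar_head a z \<Longrightarrow>
     y \<noteq> [] \<and> hd y = a \<and> last y = last (a#z) \<and> (unit_steps (a#z) \<longrightarrow> unit_steps y)"
proof (cases z rule: remdups_adj.cases)
  case (3 b c s)
  then show "y \<in># Vstar_head a z \<Longrightarrow> ?thesis" by (cases s) (auto split: if_splits)
qed (auto split: if_splits)

lemma mem_Vstar_word:
  "y \<in># Vstar_word x \<Longrightarrow> y \<noteq> [] \<and> hd y = hd x \<and> last y = last x \<and> (unit_steps x \<longrightarrow> unit_steps y)"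
proof (induction x arbitrary: y)
  case (Cons a z)
  then consider "y \<in># Vstar_head a z" | y' where "y = a#y'" "y' \<in># Vstar_word z"
    by auto
  then show ?case
  proof cases
    case 1
    then show ?thesis using mem_Vstar_head by simp
  next
    case 2
    then have "z \<noteq> []" by auto
    with Cons.IH[OF 2(2)] 2(1) show ?thesis by (auto simp: unit_steps_Cons)
  qed
qed simp

lemma motz_U_word: "motz u \<Longrightarrow> x \<in># U_word u \<Longrightarrow> motz x"
  using mem_U_word motz_iff_unit_steps by metis

lemma motz_Vstar_word: "motz u \<Longrightarrow> x \<in># Vstar_word u \<Longrightarrow> motz x"
  using mem_Vstar_word motz_iff_unit_steps by metis

definition change_positions :: "nat list \<Rightarrow> nat set" where
  "change_positions u = {i. Suc i < length u \<and> u ! i \<noteq> u ! Suc i}"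

lemma change_positions_Cons2:
  "change_positions (a#b#r) =
     (if a \<noteq> b then insert 0 (Suc ` change_positions (b#r)) else Suc ` change_positions (b#r))"
proof -
  have "i \<in> change_positions (a#b#r) \<longleftrightarrow>
      i \<in> (if a \<noteq> b then insert 0 (Suc ` change_positions (b#r)) else Suc ` change_positions (b#r))" for i
    by (cases i) (auto simp: change_positions_def)
  then show ?thesis by blast
qed

lemma finite_change_positions: "finite (change_positions u)"
  unfolding change_positions_def by (rule finite_subset[of _ "{..<length u}"]) auto

text \<open>The changes of letter are the up and down steps, and ups minus downs is last u - hd u.\<close>
lemma card_change_positions:
  "unit_steps u \<Longrightarrow> u \<noteq> [] \<Longrightarrow> card (change_positions u) + hd u = 2 * descents u + last u"
proof (induction u rule: unit_steps.induct)
  case (3 a b r)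
  then show ?case
    using finite_change_positions[of "b#r"]
    by (auto simp: change_positions_Cons2 card_image card_insert_if)
qed (auto simp: change_positions_def)

lemma card_change_positions_motz: "motz u \<Longrightarrow> card (change_positions u) = 2 * descents u"
  using card_change_positions motz_iff_unit_steps by fastforce

definition lin_ext :: "('a \<Rightarrow> bool) \<Rightarrow> ('a \<Rightarrow> 'a multiset) \<Rightarrow> ('a \<Rightarrow> 'k::comm_semiring_1) \<Rightarrow> 'a \<Rightarrow> 'k" where
  "lin_ext P K f w = (\<Sum>u\<in>{u. P u \<and> f u \<noteq> 0}. f u * of_nat (count (K u) w))"

lemma count_sum_mset_image:
  assumes "finite T" "set_mset M \<subseteq> T"
  shows "count (\<Sum>\<^sub># (image_mset g M)) w = (\<Sum>x\<in>T. count M x * count (g x) w)"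
  using assms(2)
proof (induction M)
  case (add a M)
  have "(\<Sum>x\<in>T. count (add_mset a M) x * count (g x) w)
      = (\<Sum>x\<in>T. count M x * count (g x) w + (if x = a then count (g x) w else 0))"
    by (rule sum.cong) auto
  also have "\<dots> = (\<Sum>x\<in>T. count M x * count (g x) w) + count (g a) w"
    using add.prems assms(1) by (simp add: sum.distrib)
  finally show ?case using add by simp
qed simp

lemma lin_ext_eq_sum:
  assumes "finite T" "{u. P u \<and> f u \<noteq> 0} \<subseteq> T" "\<forall>u\<in>T. P u"
  shows "lin_ext P K f w = (\<Sum>u\<in>T. f u * of_nat (count (K u) w))"
  unfolding lin_ext_def using assms by (intro sum.mono_neutral_left) auto

lemma lin_ext_comp:
  assumes fin: "finite {u. P u \<and> f u \<noteq> 0}"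
    and closed: "\<And>u x. P u \<Longrightarrow> x \<in># K u \<Longrightarrow> P x"
  shows "lin_ext P H (lin_ext P K f) w = lin_ext P (\<lambda>u. \<Sum>\<^sub># (image_mset H (K u))) f w"
proof -
  define S where "S = {u. P u \<and> f u \<noteq> 0}"
  define T where "T = (\<Union>u\<in>S. set_mset (K u))"
  have "finite T"
    using fin by (simp add: S_def T_def)
  have "{x. P x \<and> lin_ext P K f x \<noteq> 0} \<subseteq> T"
    by (force simp: lin_ext_def S_def T_def not_in_iff intro: sum.neutral)
  have "\<forall>x\<in>T. P x"
    using closed by (auto simp: S_def T_def)
  have "lin_ext P H (lin_ext P K f) w = (\<Sum>x\<in>T. lin_ext P K f x * of_nat (count (H x) w))"
    by (rule lin_ext_eq_sum) fact+
  also have "\<dots> = (\<Sum>x\<in>T. \<Sum>u\<in>S. f u * of_nat (count (K u) x * count (H x) w))"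
    by (simp add: lin_ext_def S_def sum_distrib_right mult.assoc)
  also have "\<dots> = (\<Sum>u\<in>S. f u * of_nat (\<Sum>x\<in>T. count (K u) x * count (H x) w))"
    by (subst sum.swap) (simp add: sum_distrib_left)
  also have "\<dots> = (\<Sum>u\<in>S. f u * of_nat (count (\<Sum>\<^sub># (image_mset H (K u))) w))"
  proof (intro sum.cong refl)
    fix u
    assume "u \<in> S"
    then have "set_mset (K u) \<subseteq> T"
      by (auto simp: T_def)
    then show "f u * of_nat (\<Sum>x\<in>T. count (K u) x * count (H x) w) =
        f u * of_nat (count (\<Sum>\<^sub># (image_mset H (K u))) w)"
      by (simp only: count_sum_mset_image[OF \<open>finite T\<close>])
  qed
  finally show ?thesis
    by (simp add: lin_ext_def S_def)
qed

lemma lin_ext_kernel_add: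
  "(\<And>u. P u \<Longrightarrow> K u = A u + B u) \<Longrightarrow> lin_ext P K f w = lin_ext P A f w + lin_ext P B f w"
  by (simp add: lin_ext_def distrib_left sum.distrib)

lemma lin_ext_diagonal:
  "finite {u. P u \<and> f u \<noteq> 0} \<Longrightarrow>
     lin_ext P (\<lambda>u. replicate_mset (c u) u) f w = (if P w then of_nat (c w) * f w else 0)"
  by (auto simp: lin_ext_def count_replicate_mset if_distrib sum.delta' mult.commute cong: if_cong)

lemma U_op_eq_lin_ext: "U_op f = lin_ext motz U_word f"
  by (simp add: fun_eq_iff U_op_def lin_ext_def count_mset[symmetric] mset_U_list)

lemma Vstar_op_eq_lin_ext: "Vstar_op f = lin_ext motz Vstar_word f"
proof
  fix w
  have "lin_ext motz Vstar_word f w = 0" if "\<not> motz w"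
    using motz_Vstar_word that unfolding lin_ext_def by (intro sum.neutral) (auto simp: count_eq_zero_iff)
  then show "Vstar_op f w = lin_ext motz Vstar_word f w"
    by (simp add: Vstar_op_def lin_ext_def count_mset[symmetric] count_V_list)
qed

lemma phi_op_eq_lin_ext:
  "finite {u. motz u \<and> f u \<noteq> 0} \<Longrightarrow>
     phi_op f = lin_ext motz (\<lambda>u. replicate_mset (2 + card (change_positions u)) u) f"
  by (simp only: fun_eq_iff lin_ext_diagonal) (simp add: phi_op_def change_positions_def)

theorem proposition4p9:
  fixes f :: "nat list \<Rightarrow> 'k::field_char_0"
  assumes "in_KMotz f"
  shows "(\<lambda>w. Vstar_op (U_op f) w - U_op (Vstar_op f) w) = phi_op f"
proof
  fix w
  have fin: "finite {u. motz u \<and> f u \<noteq> 0}"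
    using assms by (auto simp: in_KMotz_def intro: finite_subset)
  have "Vstar_op (U_op f) w = lin_ext motz (\<lambda>u. Vstar_ms (U_word u)) f w"
    using lin_ext_comp[OF fin motz_U_word]
    by (simp add: U_op_eq_lin_ext Vstar_op_eq_lin_ext Vstar_ms_def)
  moreover have "U_op (Vstar_op f) w = lin_ext motz (\<lambda>u. U_ms (Vstar_word u)) f w"
    using lin_ext_comp[OF fin motz_Vstar_word]
    by (simp add: U_op_eq_lin_ext Vstar_op_eq_lin_ext U_ms_def)
  moreover have "lin_ext motz (\<lambda>u. Vstar_ms (U_word u)) f w =
      lin_ext motz (\<lambda>u. U_ms (Vstar_word u)) f w
      + lin_ext motz (\<lambda>u. replicate_mset (2 + card (change_positions u)) u) f w"
    by (rule lin_ext_kernel_add)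
      (simp add: Vstar_U_word card_change_positions_motz motz_def)
  ultimately show "Vstar_op (U_op f) w - U_op (Vstar_op f) w = phi_op f w"
    by (simp add: phi_op_eq_lin_ext[OF fin])
qed

end
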